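(* Let $I$ and $J$ be big intervals. The following are equivalent: (1) there is an order-preserving injection $f:I\to J$; (2) there is a (topologically) dense subset $A\subset I$ and an order-preserving injection $h:A\to J$; (3) there is an order-preserving surjection $g:J\to I$.
   Context: A big interval is a totally ordered set, endowed with the order topology, which is compact and connected; equivalently, a totally ordered set which is order complete (every nonempty subset has a supremum), dense (between any two distinct elements there is a third), and has a minimal element $0_I$ and a maximal element $1_I$. A map between totally ordered sets is order-preserving if $s\le t$ implies $f(s)\le f(t)$. *)

theory Defs
  imports "HOL-Analysis.Analysis"
begin

text \<open>A big interval: a totally ordered set, carrying the order topology
  (class linorder_topology), which is compact and connected.  We take the
  whole type as the carrier.\<close>
definition big_interval :: "'a::linorder_topology itself \<Rightarrow> bool" where
  "big_interval _ \<longleftrightarrow> compact (UNIV :: 'a set) \<and> connected (UNIV :: 'a set)"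

end

theory Submission
  imports Defs
begin

(*
  For a linear order "order-preserving injection" is the same as "strictly
  increasing", so condition (1) of the theorem is read as strict_mono f.
  The two topological hypotheses on a big interval enter only through two
  order-theoretic consequences, proved first:
    - compactness gives every subset a least upper bound, named lub S;
    - connectedness makes the order dense.
  Then the three implications are proved at their natural generality:
    (3) => (1): a right inverse of an increasing surjection is strictly
                increasing (any linear orders);
    (1) => (3): if I has all suprema, g y = lub {x. f x <= y} is an increasing
                surjection with g o f = id;
    (2) => (1): if J has all suprema and I is densely ordered,
                f x = lub (h ` {a : A. a <= x}) is strictly increasing, since
                a dense A meets every nonempty open interval.
  (1) => (2) is immediate with A = UNIV, and the theorem is assembled last.
*)

definition lub :: "'a::linorder set \<Rightarrow> 'a" where
  "lub S = (LEAST u. \<forall>s\<in>S. s \<le> u)"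

text \<open>In a compact order topology every set has a least upper bound: the maximum
  of its (compact) closure, or the minimum of the whole space for the empty set.\<close>
lemma compact_ex_least_upper_bound:
  assumes "compact (UNIV :: 'a::linorder_topology set)"
  shows "\<exists>m::'a. (\<forall>s\<in>S. s \<le> m) \<and> (\<forall>u. (\<forall>s\<in>S. s \<le> u) \<longrightarrow> m \<le> u)"
proof (cases "S = {}")
  case True
  obtain m :: 'a where "\<forall>t. m \<le> t"
    using compact_attains_inf[OF assms] by auto
  with True show ?thesis by auto
next
  case False
  have "compact (closure S)"
    using compact_Int_closed[OF assms, of "closure S"] by simp
  moreover have "closure S \<noteq> {}"
    using False closure_subset by blast
  ultimately obtain m where m: "m \<in> closure S" "\<forall>t\<in>closure S. t \<le> m"
    using compact_attains_sup by blast
  have "m \<le> u" if "\<forall>s\<in>S. s \<le> u" for u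
  proof -
    have "closure S \<subseteq> {..u}"
      using that by (intro closure_minimal) auto
    with m show ?thesis by auto
  qed
  with m closure_subset show ?thesis by blast
qed

lemma lub_is_least_upper_bound:
  fixes S :: "'a::linorder_topology set"
  assumes "compact (UNIV :: 'a set)"
  shows "(\<forall>s\<in>S. s \<le> lub S) \<and> (\<forall>u. (\<forall>s\<in>S. s \<le> u) \<longrightarrow> lub S \<le> u)"
proof -
  obtain m where m: "\<forall>s\<in>S. s \<le> m" "\<forall>u. (\<forall>s\<in>S. s \<le> u) \<longrightarrow> m \<le> u"
    using compact_ex_least_upper_bound[OF assms] by blast
  then have "lub S = m"
    unfolding lub_def by (intro Least_equality) auto
  with m show ?thesis by simp
qed

lemma lub_upper:
  fixes S :: "'a::linorder_topology set"
  assumes "compact (UNIV :: 'a set)" and "s \<in> S"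
  shows "s \<le> lub S"
  using lub_is_least_upper_bound[OF assms(1)] assms(2) by blast

lemma lub_least:
  fixes S :: "'a::linorder_topology set"
  assumes "compact (UNIV :: 'a set)" and "\<And>s. s \<in> S \<Longrightarrow> s \<le> u"
  shows "lub S \<le> u"
  using lub_is_least_upper_bound[OF assms(1)] assms(2) by blast

lemma lub_mono:
  assumes "compact (UNIV :: 'a::linorder_topology set)" and "S \<subseteq> T"
  shows "lub S \<le> lub (T :: 'a set)"
  using assms by (blast intro: lub_least lub_upper)

text \<open>If nothing lay strictly between x < y, the space would split into the
  disjoint nonempty open sets {..<y} and {x<..}.\<close>
lemma connected_order_dense:
  assumes "connected (UNIV :: 'a::linorder_topology set)" and "(x::'a) < y"
  shows "\<exists>c. x < c \<and> c < y"
proof (rule ccontr)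
  assume gap: "\<nexists>c. x < c \<and> c < y"
  have "{..<y} \<inter> {x<..} \<inter> UNIV = {}"
    using gap by auto
  moreover have "UNIV \<subseteq> {..<y} \<union> {x<..}"
    using assms(2) by (auto simp: not_less intro: less_le_trans)
  ultimately have "{..<y} \<inter> UNIV = {} \<or> {x<..} \<inter> UNIV = {}"
    by (rule connectedD[OF assms(1) open_lessThan open_greaterThan])
  with assms(2) show False by auto
qed

lemma dense_subset_between:
  assumes "connected (UNIV :: 'a::linorder_topology set)"
    and "closure A = UNIV" and "(x::'a) < y"
  shows "\<exists>a\<in>A. x < a \<and> a < y"
proof -
  have "{x<..<y} \<noteq> {}"
    using connected_order_dense[OF assms(1,3)] by auto
  then have "{x<..<y} \<inter> A \<noteq> {}"
    using open_Int_closure_eq_empty[of "{x<..<y}" A] assms(2) by auto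
  then show ?thesis by auto
qed

lemma mono_surj_imp_strict_mono_right_inverse:
  fixes g :: "'b::linorder \<Rightarrow> 'a::linorder"
  assumes "mono g" and "surj g"
  shows "\<exists>f :: 'a \<Rightarrow> 'b. strict_mono f"
proof
  have right_inverse: "g (inv g x) = x" for x
    using assms(2) by (rule surj_f_inv_f)
  show "strict_mono (inv g)"
  proof (rule strict_monoI)
    fix x y :: 'a assume "x < y"
    show "inv g x < inv g y"
    proof (rule ccontr)
      assume "\<not> inv g x < inv g y"
      then have "g (inv g y) \<le> g (inv g x)"
        by (simp add: monoD[OF assms(1)])
      with \<open>x < y\<close> show False by (simp add: right_inverse)
    qed
  qed
qed

lemma strict_mono_imp_mono_surj:
  fixes f :: "'a::linorder_topology \<Rightarrow> 'b::linorder"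
  assumes cpt: "compact (UNIV :: 'a set)" and "strict_mono f"
  shows "\<exists>g :: 'b \<Rightarrow> 'a. mono g \<and> surj g"
proof (intro exI conjI)
  define g where "g y = lub {x. f x \<le> y}" for y
  show "mono g"
    unfolding g_def by (rule monoI, rule lub_mono[OF cpt]) auto
  have "g (f x) = x" for x
  proof -
    have "{x'. f x' \<le> f x} = {..x}"
      using \<open>strict_mono f\<close> by (auto simp: strict_mono_less_eq)
    then have "g (f x) = lub {..x}"
      by (simp add: g_def)
    also have "\<dots> = x"
      by (rule order.antisym) (auto intro: lub_least[OF cpt] lub_upper[OF cpt])
    finally show ?thesis .
  qed
  then show "surj g" by (rule surjI)
qed

text \<open>(2) \<Longrightarrow> (1): if the codomain has all suprema and the domain is connected,
  an increasing injection h defined on a dense subset A extends to the strictly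
  increasing map f x = lub (h ` {a\<in>A. a \<le> x}): between x < y there are
  a < b in A, and f x \<le> h a < h b \<le> f y.\<close>
lemma dense_embedding_extends:
  fixes h :: "'a::linorder_topology \<Rightarrow> 'b::linorder_topology"
  assumes cpt: "compact (UNIV :: 'b set)" and conn: "connected (UNIV :: 'a set)"
    and dense: "closure A = UNIV" and "mono_on A h" and "inj_on h A"
  shows "\<exists>f :: 'a \<Rightarrow> 'b. strict_mono f"
proof
  have h_strict: "strict_mono_on A h"
    using assms(4,5) by (rule mono_imp_strict_mono)
  define f where "f x = lub (h ` {a\<in>A. a \<le> x})" for x
  show "strict_mono f"
  proof (rule strict_monoI)
    fix x y :: 'a assume "x < y"
    obtain a where a: "a \<in> A" "x < a" "a < y"
      using dense_subset_between[OF conn dense \<open>x < y\<close>] by blast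
    obtain b where b: "b \<in> A" "a < b" "b < y"
      using dense_subset_between[OF conn dense \<open>a < y\<close>] by blast
    have "f x \<le> h a"
      unfolding f_def
    proof (rule lub_least[OF cpt])
      fix s assume "s \<in> h ` {a'\<in>A. a' \<le> x}"
      then obtain a' where "a' \<in> A" "a' \<le> x" "s = h a'" by auto
      with a show "s \<le> h a"
        using mono_onD[OF assms(4)] by auto
    qed
    also have "h a < h b"
      using strict_mono_onD[OF h_strict] a b by blast
    also have "h b \<le> f y"
      unfolding f_def using b by (intro lub_upper[OF cpt]) auto
    finally show "f x < f y" .
  qed
qed

theorem mainTheorem1:
  assumes "big_interval TYPE('a::linorder_topology)"
      and "big_interval TYPE('b::linorder_topology)"
  shows "((\<exists>f :: 'a \<Rightarrow> 'b. mono f \<and> inj f)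
            \<longleftrightarrow> (\<exists>(A :: 'a set) (h :: 'a \<Rightarrow> 'b). closure A = UNIV \<and> mono_on A h \<and> inj_on h A))
       \<and> ((\<exists>f :: 'a \<Rightarrow> 'b. mono f \<and> inj f)
            \<longleftrightarrow> (\<exists>g :: 'b \<Rightarrow> 'a. mono g \<and> surj g))"
proof -
  have cptA: "compact (UNIV :: 'a set)" and connA: "connected (UNIV :: 'a set)"
    and cptB: "compact (UNIV :: 'b set)"
    using assms by (auto simp: big_interval_def)
  have strict_mono_iff: "strict_mono f \<longleftrightarrow> mono f \<and> inj f" for f :: "'a \<Rightarrow> 'b"
    using strict_mono_iff_mono[of UNIV f] by simp
  have "(\<exists>f :: 'a \<Rightarrow> 'b. mono f \<and> inj f)
          \<longrightarrow> (\<exists>(A :: 'a set) (h :: 'a \<Rightarrow> 'b). closure A = UNIV \<and> mono_on A h \<and> inj_on h A)"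
    using closure_UNIV by blast
  moreover have "(\<exists>(A :: 'a set) (h :: 'a \<Rightarrow> 'b). closure A = UNIV \<and> mono_on A h \<and> inj_on h A)
          \<longrightarrow> (\<exists>f :: 'a \<Rightarrow> 'b. strict_mono f)"
    using dense_embedding_extends[OF cptB connA] by blast
  moreover have "(\<exists>f :: 'a \<Rightarrow> 'b. strict_mono f) \<longleftrightarrow> (\<exists>g :: 'b \<Rightarrow> 'a. mono g \<and> surj g)"
    using strict_mono_imp_mono_surj[OF cptA] mono_surj_imp_strict_mono_right_inverse by blast
  ultimately show ?thesis
    using strict_mono_iff by blast
qed

end
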